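(* Let $\mu>-1$, $\beta>0$, $N\ge1$, $Z\in\{G,R\}$, $\omega=x^\mu$. Let $\phi_1,\phi_2$ be real continuous functions on $[0,\infty)$ in $L^2_{x^\mu}(\mathbb R_+)$, $\phi=\phi_1\phi_2$, $\psi_i=\widehat I_{Z,N}^{(\mu,\beta)}\phi_i$ ($i=1,2$). Then $$\Bigl|\int_0^\infty\phi(x)x^\mu dx-\sum_{j=0}^N\phi\bigl(\xi^{(\mu,\beta)}_{Z,N,j}\bigr)\widehat\omega^{(\mu,\beta)}_{Z,N,j}\Bigr| \le\bigl(\|\phi_1\|_\omega+\|\phi_2\|_\omega+\|\psi_1\|_\omega+\|\psi_2\|_\omega\bigr)\bigl(\|\phi_1-\psi_1\|_\omega+\|\phi_2-\psi_2\|_\omega\bigr).$$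
   Context: $\|f\|_\omega=(\int_0^\infty|f|^2\omega)^{1/2}$; $P_K$ is the space of polynomials of degree at most $K$. $\mathscr L_n^{(\alpha)}$ is the generalized Laguerre polynomial (orthogonal on $(0,\infty)$ w.r.t. $x^\alpha e^{-x}$), $\widehat{\mathscr L}_n^{(\alpha)}(x)=e^{-x/2}\mathscr L_n^{(\alpha)}(x)$, and $\widehat P_N^{\beta,L}=\{e^{-\beta x/2}p:p\in P_N\}$. Laguerre–Gauss nodes $\xi^{(\mu,\beta)}_{G,N,j}$ ($0\le j\le N$) are the zeros of $\widehat{\mathscr L}^{(\mu)}_{N+1}(\beta x)$; Laguerre–Gauss–Radau nodes $\xi^{(\mu,\beta)}_{R,N,j}$ are the zeros of $x\,\widehat{\mathscr L}^{(\mu+1)}_{N}(\beta x)$. $\widehat I_{Z,N}^{(\mu,\beta)}v$ is the unique element of $\widehat P_N^{\beta,L}$ agreeing with $v$ at these nodes. The weights $\widehat\omega^{(\mu,\beta)}_{Z,N,j}$ are the numbers such that $\int_0^\infty\phi(x)x^\mu dx=\sum_{j}\phi(\xi^{(\mu,\beta)}_{Z,N,j})\widehat\omega^{(\mu,\beta)}_{Z,N,j}$ for all $\phi\in\{e^{-\beta x}p:p\in P_{2N+\lambda_Z}\}$, with $\lambda_G=1$, $\lambda_R=0$ (equivalently $\widehat\omega_{Z,N,j}=e^{\beta\xi_{Z,N,j}}\omega_{Z,N,j}$ where $\omega_{Z,N,j}$ are the Gauss, resp. Gauss–Radau, weights for the weight $x^\mu e^{-\beta x}$). *)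

theory Defs
  imports "HOL-Analysis.Analysis" "HOL-Computational_Algebra.Polynomial"
begin

definition laguerre :: "real \<Rightarrow> nat \<Rightarrow> real \<Rightarrow> real" where
  "laguerre \<alpha> n x = (\<Sum>k\<le>n. (-1)^k * ((real n + \<alpha>) gchoose (n - k)) / fact k * x ^ k)"

definition hat_laguerre :: "real \<Rightarrow> nat \<Rightarrow> real \<Rightarrow> real" where
  "hat_laguerre \<alpha> n x = exp (- x / 2) * laguerre \<alpha> n x"

datatype quad_kind = Gauss | Radau

definition lam :: "quad_kind \<Rightarrow> nat" where
  "lam Z = (case Z of Gauss \<Rightarrow> 1 | Radau \<Rightarrow> 0)"

definition lg_nodes :: "quad_kind \<Rightarrow> real \<Rightarrow> real \<Rightarrow> nat \<Rightarrow> real set" where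
  "lg_nodes Z \<mu> \<beta> N = (case Z of
      Gauss \<Rightarrow> {x. 0 \<le> x \<and> hat_laguerre \<mu> (N + 1) (\<beta> * x) = 0}
    | Radau \<Rightarrow> {x. 0 \<le> x \<and> x * hat_laguerre (\<mu> + 1) N (\<beta> * x) = 0})"

definition lg_weight :: "quad_kind \<Rightarrow> real \<Rightarrow> real \<Rightarrow> nat \<Rightarrow> real \<Rightarrow> real" where
  "lg_weight Z \<mu> \<beta> N = (THE w. (\<forall>x. x \<notin> lg_nodes Z \<mu> \<beta> N \<longrightarrow> w x = 0) \<and>
      (\<forall>p :: real poly. degree p \<le> 2 * N + lam Z \<longrightarrow>
         (LINT x:{0<..}|lborel. exp (- \<beta> * x) * poly p x * x powr \<mu>) =
         (\<Sum>\<xi>\<in>lg_nodes Z \<mu> \<beta> N. exp (- \<beta> * \<xi>) * poly p \<xi> * w \<xi>)))"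

definition lg_interp :: "quad_kind \<Rightarrow> real \<Rightarrow> real \<Rightarrow> nat \<Rightarrow> (real \<Rightarrow> real) \<Rightarrow> real \<Rightarrow> real" where
  "lg_interp Z \<mu> \<beta> N v = (let q = (THE q :: real poly. degree q \<le> N \<and>
        (\<forall>\<xi>\<in>lg_nodes Z \<mu> \<beta> N. exp (- \<beta> * \<xi> / 2) * poly q \<xi> = v \<xi>))
      in (\<lambda>x. exp (- \<beta> * x / 2) * poly q x))"

definition wnorm :: "real \<Rightarrow> (real \<Rightarrow> real) \<Rightarrow> real" where
  "wnorm \<mu> f = sqrt (LINT x:{0<..}|lborel. (f x)\<^sup>2 * x powr \<mu>)"

end

theory Submission
  imports Defs
begin

text \<open>
  Both interpolants \<psi>1, \<psi>2 lie in exp(-\<beta>x/2) P_N, so \<psi>1 \<psi>2 lies in exp(-\<beta>x) P_2N, where the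
  quadrature rule is exact; as \<psi>i agrees with \<phi>i at the nodes, the quadrature sum of \<phi>1 \<phi>2 is
  the exact integral of \<psi>1 \<psi>2. The error is then the integral of (\<phi>1 - \<psi>1) \<phi>2 + \<psi>1 (\<phi>2 - \<psi>2)
  against x^\<mu>, and Cauchy-Schwarz bounds both terms.

  The work lies in showing that the rule is well defined and exact. The Laguerre polynomial
  L_n^(\<alpha>)(\<beta>x) is orthogonal to P_(n-1) for the weight x^\<alpha> exp(-\<beta>x) (after expanding, this is an
  n-th finite difference of a polynomial of degree < n), so it has n simple positive zeros. The
  nodes are the zeros of the node polynomial L_(N+1)^(\<mu>)(\<beta>x) (Gauss), resp. x L_N^(\<mu>+1)(\<beta>x)
  (Radau); division with remainder by it shows that the interpolatory weights are exact on
  exp(-\<beta>x) P_(2N+\<lambda>), and that they are the only such weights.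
\<close>

section \<open>Products of square-integrable functions\<close>

lemma integrable_mult_if_square_integrable:
  fixes f g :: "'a \<Rightarrow> real"
  assumes [measurable]: "f \<in> borel_measurable M" "g \<in> borel_measurable M"
    and "integrable M (\<lambda>x. (f x)\<^sup>2)" "integrable M (\<lambda>x. (g x)\<^sup>2)"
  shows "integrable M (\<lambda>x. f x * g x)"
proof (rule Bochner_Integration.integrable_bound)
  show "integrable M (\<lambda>x. (f x)\<^sup>2 + (g x)\<^sup>2)"
    using assms(3,4) by simp
  show "AE x in M. norm (f x * g x) \<le> norm ((f x)\<^sup>2 + (g x)\<^sup>2)"
  proof (rule AE_I2)
    fix x
    have "2 * (\<bar>f x\<bar> * \<bar>g x\<bar>) \<le> (f x)\<^sup>2 + (g x)\<^sup>2"
      using sum_squares_bound[of "\<bar>f x\<bar>" "\<bar>g x\<bar>"] by (simp add: mult.assoc)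
    moreover have "0 \<le> \<bar>f x\<bar> * \<bar>g x\<bar>" by simp
    ultimately have "\<bar>f x\<bar> * \<bar>g x\<bar> \<le> (f x)\<^sup>2 + (g x)\<^sup>2" by linarith
    thus "norm (f x * g x) \<le> norm ((f x)\<^sup>2 + (g x)\<^sup>2)"
      by (simp add: abs_mult)
  qed
qed simp

definition L2_norm :: "'a measure \<Rightarrow> ('a \<Rightarrow> real) \<Rightarrow> real" where
  "L2_norm M f = sqrt (integral\<^sup>L M (\<lambda>x. (f x)\<^sup>2))"

lemma L2_norm_nonneg: "0 \<le> L2_norm M f"
  by (simp add: L2_norm_def integral_nonneg)

lemma Cauchy_Schwarz_integral:
  fixes f g :: "'a \<Rightarrow> real"
  assumes [measurable]: "f \<in> borel_measurable M" "g \<in> borel_measurable M"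
    and f2: "integrable M (\<lambda>x. (f x)\<^sup>2)" and g2: "integrable M (\<lambda>x. (g x)\<^sup>2)"
  shows "\<bar>integral\<^sup>L M (\<lambda>x. f x * g x)\<bar> \<le> L2_norm M f * L2_norm M g"
proof -
  have fg: "integrable M (\<lambda>x. \<bar>f x * g x\<bar>)"
    using integrable_mult_if_square_integrable[OF assms] by simp
  have nn_square: "(\<integral>\<^sup>+x. ennreal \<bar>h x\<bar> ^ 2 \<partial>M) = ennreal (integral\<^sup>L M (\<lambda>x. (h x)\<^sup>2))"
    if [measurable]: "h \<in> borel_measurable M" and "integrable M (\<lambda>x. (h x)\<^sup>2)" for h
    using that(2) by (simp add: ennreal_power nn_integral_eq_integral)
  have "ennreal (integral\<^sup>L M (\<lambda>x. \<bar>f x * g x\<bar>)) ^ 2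
      = (\<integral>\<^sup>+x. ennreal \<bar>f x\<bar> * ennreal \<bar>g x\<bar> \<partial>M) ^ 2"
    using fg by (simp add: nn_integral_eq_integral ennreal_mult[symmetric] abs_mult)
  also have "\<dots> \<le> (\<integral>\<^sup>+x. ennreal \<bar>f x\<bar> ^ 2 \<partial>M) * (\<integral>\<^sup>+x. ennreal \<bar>g x\<bar> ^ 2 \<partial>M)"
    by (rule Cauchy_Schwarz_nn_integral) simp_all
  also have "\<dots> = ennreal (integral\<^sup>L M (\<lambda>x. (f x)\<^sup>2) * integral\<^sup>L M (\<lambda>x. (g x)\<^sup>2))"
    using f2 g2 by (simp add: nn_square ennreal_mult')
  finally have "(integral\<^sup>L M (\<lambda>x. \<bar>f x * g x\<bar>))\<^sup>2
      \<le> integral\<^sup>L M (\<lambda>x. (f x)\<^sup>2) * integral\<^sup>L M (\<lambda>x. (g x)\<^sup>2)"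
    by (simp add: ennreal_power ennreal_le_iff integral_nonneg)
  hence "integral\<^sup>L M (\<lambda>x. \<bar>f x * g x\<bar>) \<le> L2_norm M f * L2_norm M g"
    unfolding L2_norm_def real_sqrt_mult[symmetric] by (rule real_le_rsqrt)
  moreover have "\<bar>integral\<^sup>L M (\<lambda>x. f x * g x)\<bar> \<le> integral\<^sup>L M (\<lambda>x. \<bar>f x * g x\<bar>)"
    by (rule integral_abs_bound)
  ultimately show ?thesis by linarith
qed

lemma integrable_square_diff:
  fixes f g :: "'a \<Rightarrow> real"
  assumes "f \<in> borel_measurable M" "g \<in> borel_measurable M"
    and "integrable M (\<lambda>x. (f x)\<^sup>2)" "integrable M (\<lambda>x. (g x)\<^sup>2)"
  shows "integrable M (\<lambda>x. (f x - g x)\<^sup>2)"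
proof -
  have "integrable M (\<lambda>x. (f x)\<^sup>2 + (g x)\<^sup>2 - 2 * f x * g x)"
    using integrable_mult_if_square_integrable[OF assms] assms(3,4)
    by (intro Bochner_Integration.integrable_diff Bochner_Integration.integrable_add)
       (simp_all add: mult.assoc)
  thus ?thesis by (simp add: power2_diff)
qed

lemma integral_mult_diff_le:
  fixes f1 f2 g1 g2 :: "'a \<Rightarrow> real"
  assumes [measurable]: "f1 \<in> borel_measurable M" "f2 \<in> borel_measurable M"
      "g1 \<in> borel_measurable M" "g2 \<in> borel_measurable M"
    and sq: "integrable M (\<lambda>x. (f1 x)\<^sup>2)" "integrable M (\<lambda>x. (f2 x)\<^sup>2)"
      "integrable M (\<lambda>x. (g1 x)\<^sup>2)" "integrable M (\<lambda>x. (g2 x)\<^sup>2)"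
  shows "\<bar>integral\<^sup>L M (\<lambda>x. f1 x * f2 x) - integral\<^sup>L M (\<lambda>x. g1 x * g2 x)\<bar>
           \<le> L2_norm M (\<lambda>x. f1 x - g1 x) * L2_norm M f2 + L2_norm M g1 * L2_norm M (\<lambda>x. f2 x - g2 x)"
proof -
  have d1: "integrable M (\<lambda>x. (f1 x - g1 x)\<^sup>2)" and d2: "integrable M (\<lambda>x. (f2 x - g2 x)\<^sup>2)"
    using integrable_square_diff[of f1 M g1] integrable_square_diff[of f2 M g2] sq by simp_all
  have i: "integrable M (\<lambda>x. f1 x * f2 x)" "integrable M (\<lambda>x. g1 x * f2 x)"
    "integrable M (\<lambda>x. g1 x * g2 x)"
    using assms by (auto intro!: integrable_mult_if_square_integrable)
  have "integral\<^sup>L M (\<lambda>x. (f1 x - g1 x) * f2 x)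
      = integral\<^sup>L M (\<lambda>x. f1 x * f2 x) - integral\<^sup>L M (\<lambda>x. g1 x * f2 x)"
    unfolding left_diff_distrib by (rule Bochner_Integration.integral_diff[OF i(1,2)])
  moreover have "integral\<^sup>L M (\<lambda>x. g1 x * (f2 x - g2 x))
      = integral\<^sup>L M (\<lambda>x. g1 x * f2 x) - integral\<^sup>L M (\<lambda>x. g1 x * g2 x)"
    unfolding right_diff_distrib by (rule Bochner_Integration.integral_diff[OF i(2,3)])
  ultimately have "integral\<^sup>L M (\<lambda>x. f1 x * f2 x) - integral\<^sup>L M (\<lambda>x. g1 x * g2 x)
      = integral\<^sup>L M (\<lambda>x. (f1 x - g1 x) * f2 x) + integral\<^sup>L M (\<lambda>x. g1 x * (f2 x - g2 x))"
    by simp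
  also have "\<bar>\<dots>\<bar> \<le> L2_norm M (\<lambda>x. f1 x - g1 x) * L2_norm M f2 + L2_norm M g1 * L2_norm M (\<lambda>x. f2 x - g2 x)"
    using Cauchy_Schwarz_integral[of "\<lambda>x. f1 x - g1 x" M f2] Cauchy_Schwarz_integral[of g1 M "\<lambda>x. f2 x - g2 x"]
      sq d1 d2 by simp
  finally show ?thesis .
qed

section \<open>The measure x^\<mu> dx on the half-line\<close>

text \<open>Restricting to (0,\<infinity>) before taking the density makes functions that are only
  continuous on [0,\<infinity>) measurable.\<close>

definition powr_halfline :: "real \<Rightarrow> real measure" where
  "powr_halfline \<mu> = density (restrict_space lborel {0<..}) (\<lambda>x. x powr \<mu>)"

lemma sets_powr_halfline:
  "sets (powr_halfline \<mu>) = sets (restrict_space borel {0<..})"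
  by (simp add: powr_halfline_def sets_restrict_space)

lemma borel_measurable_powr_halfline:
  "f \<in> borel_measurable borel \<Longrightarrow> f \<in> borel_measurable (powr_halfline \<mu>)"
  by (simp add: measurable_cong_sets[OF sets_powr_halfline refl] measurable_restrict_space1)

lemma borel_measurable_powr_halfline_if_continuous_on:
  "continuous_on {0..} f \<Longrightarrow> f \<in> borel_measurable (powr_halfline \<mu>)"
  unfolding measurable_cong_sets[OF sets_powr_halfline refl]
  by (rule borel_measurable_continuous_on_restrict) (auto elim: continuous_on_subset)

lemma borel_measurable_exp_poly:
  fixes c :: real
  shows "(\<lambda>x. exp (c * x) * poly p x) \<in> borel_measurable borel"
  by (intro borel_measurable_continuous_onI continuous_intros continuous_on_poly[OF continuous_on_id'])

lemma
  assumes f: "f \<in> borel_measurable (powr_halfline \<mu>)"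
  shows integrable_powr_halfline_iff:
      "integrable (powr_halfline \<mu>) f \<longleftrightarrow> set_integrable lborel {0<..} (\<lambda>x. f x * x powr \<mu>)"
    and integral_powr_halfline:
      "integral\<^sup>L (powr_halfline \<mu>) f = (LINT x:{0<..}|lborel. f x * x powr \<mu>)"
proof -
  have sets: "sets (restrict_space lborel {0<..}) = sets (powr_halfline \<mu>)"
    by (simp add: powr_halfline_def)
  have f': "f \<in> borel_measurable (restrict_space lborel {0<..})"
    using f by (simp only: measurable_cong_sets[OF sets refl])
  have w: "(\<lambda>x. x powr \<mu>) \<in> borel_measurable (restrict_space lborel {0<..})"
    by (rule measurable_restrict_space1) simp
  have "integrable (powr_halfline \<mu>) f
      \<longleftrightarrow> integrable (restrict_space lborel {0<..}) (\<lambda>x. x powr \<mu> *\<^sub>R f x)"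
    unfolding powr_halfline_def using f' w by (rule integrable_density) simp
  thus "integrable (powr_halfline \<mu>) f \<longleftrightarrow> set_integrable lborel {0<..} (\<lambda>x. f x * x powr \<mu>)"
    by (simp add: set_integrable_def integrable_restrict_space mult.commute)
  have "integral\<^sup>L (powr_halfline \<mu>) f
      = integral\<^sup>L (restrict_space lborel {0<..}) (\<lambda>x. x powr \<mu> *\<^sub>R f x)"
    unfolding powr_halfline_def using f' w by (rule integral_density) simp
  thus "integral\<^sup>L (powr_halfline \<mu>) f = (LINT x:{0<..}|lborel. f x * x powr \<mu>)"
    by (simp add: set_lebesgue_integral_def integral_restrict_space mult.commute)
qed

lemma integral_powr_halfline_mult_x:
  assumes "f \<in> borel_measurable borel"
  shows "integral\<^sup>L (powr_halfline \<mu>) (\<lambda>x. x * f x) = integral\<^sup>L (powr_halfline (\<mu> + 1)) f"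
proof -
  have "(LINT x:{0<..}|lborel. x * f x * x powr \<mu>) = (LINT x:{0<..}|lborel. f x * x powr (\<mu> + 1))"
    by (rule set_lebesgue_integral_cong) (auto simp: powr_add)
  thus ?thesis
    using assms by (simp add: integral_powr_halfline borel_measurable_powr_halfline)
qed

lemma AE_powr_halfline_iff:
  "(AE x in powr_halfline \<mu>. P x) \<longleftrightarrow> (AE x in lborel. 0 < x \<longrightarrow> P x)"
proof -
  have w: "(\<lambda>x. ennreal (x powr \<mu>)) \<in> borel_measurable (restrict_space lborel {0<..})"
    by (rule measurable_restrict_space1) simp
  have pos: "(0 < x \<longrightarrow> 0 < ennreal (x powr \<mu>) \<longrightarrow> P x) \<longleftrightarrow> (0 < x \<longrightarrow> P x)" for x :: real
    by auto
  have "(AE x in powr_halfline \<mu>. P x)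
      \<longleftrightarrow> (AE x in restrict_space lborel {0<..}. 0 < ennreal (x powr \<mu>) \<longrightarrow> P x)"
    unfolding powr_halfline_def by (rule AE_density[OF w])
  also have "\<dots> \<longleftrightarrow> (AE x in lborel. 0 < x \<longrightarrow> P x)"
    by (subst AE_restrict_space_iff)
       (simp_all only: pos greaterThan_iff sets_lborel space_lborel space_borel Int_UNIV_right
         borel_open open_greaterThan)
  finally show ?thesis .
qed

lemma wnorm_eq_L2_norm:
  assumes [measurable]: "f \<in> borel_measurable (powr_halfline \<mu>)"
  shows "wnorm \<mu> f = L2_norm (powr_halfline \<mu>) f"
proof -
  have "(\<lambda>x. (f x)\<^sup>2) \<in> borel_measurable (powr_halfline \<mu>)" by measurable
  thus ?thesis by (simp add: wnorm_def L2_norm_def integral_powr_halfline)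
qed

lemma integral_mult_diff_le_wnorm:
  fixes f1 f2 g1 g2 :: "real \<Rightarrow> real"
  assumes "f1 \<in> borel_measurable (powr_halfline \<mu>)" "f2 \<in> borel_measurable (powr_halfline \<mu>)"
      "g1 \<in> borel_measurable (powr_halfline \<mu>)" "g2 \<in> borel_measurable (powr_halfline \<mu>)"
    and "integrable (powr_halfline \<mu>) (\<lambda>x. (f1 x)\<^sup>2)" "integrable (powr_halfline \<mu>) (\<lambda>x. (f2 x)\<^sup>2)"
      "integrable (powr_halfline \<mu>) (\<lambda>x. (g1 x)\<^sup>2)" "integrable (powr_halfline \<mu>) (\<lambda>x. (g2 x)\<^sup>2)"
  shows "\<bar>integral\<^sup>L (powr_halfline \<mu>) (\<lambda>x. f1 x * f2 x) - integral\<^sup>L (powr_halfline \<mu>) (\<lambda>x. g1 x * g2 x)\<bar>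
           \<le> (wnorm \<mu> f1 + wnorm \<mu> f2 + wnorm \<mu> g1 + wnorm \<mu> g2)
             * (wnorm \<mu> (\<lambda>x. f1 x - g1 x) + wnorm \<mu> (\<lambda>x. f2 x - g2 x))"
proof -
  let ?N = "L2_norm (powr_halfline \<mu>)"
  have "\<bar>integral\<^sup>L (powr_halfline \<mu>) (\<lambda>x. f1 x * f2 x) - integral\<^sup>L (powr_halfline \<mu>) (\<lambda>x. g1 x * g2 x)\<bar>
      \<le> ?N (\<lambda>x. f1 x - g1 x) * ?N f2 + ?N g1 * ?N (\<lambda>x. f2 x - g2 x)"
    using assms by (rule integral_mult_diff_le)
  also have "\<dots> \<le> (?N f1 + ?N f2 + ?N g1 + ?N g2) * (?N (\<lambda>x. f1 x - g1 x) + ?N (\<lambda>x. f2 x - g2 x))"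
    using L2_norm_nonneg[of "powr_halfline \<mu>"]
    by (simp add: algebra_simps add_increasing add_increasing2 mult_nonneg_nonneg)
  finally show ?thesis
    using assms(1-4) by (simp add: wnorm_eq_L2_norm)
qed

lemma nn_integral_exp_powr:
  fixes a \<beta> :: real
  assumes a: "a > -1" and b: "\<beta> > 0"
  shows "(\<integral>\<^sup>+x. ennreal (indicator {0<..} x * (exp (-\<beta>*x) * x powr a)) \<partial>lborel)
           = ennreal (Gamma (a+1) / \<beta> powr (a+1))"
proof -
  define f where "f = (\<lambda>x. ennreal (indicator {0<..} x * (exp (-\<beta>*x) * x powr a)))"
  have "f \<in> borel_measurable borel" unfolding f_def by measurable
  hence "(\<integral>\<^sup>+x. f x \<partial>lborel) = \<bar>1/\<beta>\<bar> * (\<integral>\<^sup>+x. f (0 + (1/\<beta>) * x) \<partial>lborel)"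
    by (rule nn_integral_real_affine) (use b in simp)
  also have "(\<lambda>x. f (0 + (1/\<beta>) * x))
      = (\<lambda>x. ennreal (\<beta> powr (-a)) * ennreal (indicator {0..} x * x powr ((a+1) - 1) / exp x))"
  proof
    fix x :: real
    show "f (0 + (1/\<beta>) * x)
        = ennreal (\<beta> powr (-a)) * ennreal (indicator {0..} x * x powr ((a+1) - 1) / exp x)"
    proof (cases "x > 0")
      case True
      hence "f (0 + (1/\<beta>) * x) = ennreal (exp (-x) * (x / \<beta>) powr a)"
        using b by (simp add: f_def)
      also have "(x / \<beta>) powr a = \<beta> powr (-a) * x powr a"
        using True b by (simp add: powr_divide powr_minus field_simps)
      finally show ?thesis using True b
        by (simp add: ennreal_mult[symmetric] exp_minus field_simps)
    next
      case False
      thus ?thesis using b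
        by (cases "x = 0") (auto simp: f_def indicator_def zero_less_mult_iff zero_less_divide_iff)
    qed
  qed
  also have "(\<integral>\<^sup>+x. ennreal (\<beta> powr (-a)) * ennreal (indicator {0..} x * x powr ((a+1) - 1) / exp x) \<partial>lborel)
      = ennreal (\<beta> powr (-a)) * Gamma (a+1)"
    using Gamma_conv_nn_integral_real[of "a+1"] a by (subst nn_integral_cmult) (simp_all, measurable)
  finally show ?thesis
    using b a Gamma_real_pos[of "a+1"]
    by (simp add: f_def ennreal_mult[symmetric] powr_minus powr_add field_simps)
qed

lemma has_bochner_integral_exp_powr:
  fixes a \<beta> :: real
  assumes "a > -1" and "\<beta> > 0"
  shows "has_bochner_integral lborel (\<lambda>x. indicator {0<..} x * (exp (-\<beta>*x) * x powr a))
           (Gamma (a+1) / \<beta> powr (a+1))"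
  by (rule has_bochner_integral_nn_integral)
     (use nn_integral_exp_powr[OF assms] assms Gamma_real_pos[of "a+1"] in \<open>auto simp: indicator_def\<close>)

lemma
  assumes "\<mu> > -1" and "\<beta> > 0"
  shows integrable_exp_power_powr_halfline:
      "integrable (powr_halfline \<mu>) (\<lambda>x. exp (-\<beta>*x) * x ^ k)"
    and integral_exp_power_powr_halfline:
      "integral\<^sup>L (powr_halfline \<mu>) (\<lambda>x. exp (-\<beta>*x) * x ^ k)
         = Gamma (real k + \<mu> + 1) / \<beta> powr (real k + \<mu> + 1)"
proof -
  have m: "(\<lambda>x. exp (-\<beta>*x) * x ^ k) \<in> borel_measurable (powr_halfline \<mu>)"
    by (rule borel_measurable_powr_halfline) simp
  have "(\<lambda>x. indicator {0<..} x *\<^sub>R (exp (-\<beta>*x) * x ^ k * x powr \<mu>))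
      = (\<lambda>x. indicator {0<..} x * (exp (-\<beta>*x) * x powr (real k + \<mu>)))"
    by (auto simp: indicator_def powr_add powr_realpow)
  hence h: "has_bochner_integral lborel (\<lambda>x. indicator {0<..} x *\<^sub>R (exp (-\<beta>*x) * x ^ k * x powr \<mu>))
      (Gamma (real k + \<mu> + 1) / \<beta> powr (real k + \<mu> + 1))"
    using has_bochner_integral_exp_powr[of "real k + \<mu>" \<beta>] assms by (simp add: add.assoc)
  show "integrable (powr_halfline \<mu>) (\<lambda>x. exp (-\<beta>*x) * x ^ k)"
    unfolding integrable_powr_halfline_iff[OF m] set_integrable_def
    using integrable.intros[OF h] by simp
  show "integral\<^sup>L (powr_halfline \<mu>) (\<lambda>x. exp (-\<beta>*x) * x ^ k)
      = Gamma (real k + \<mu> + 1) / \<beta> powr (real k + \<mu> + 1)"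
    unfolding integral_powr_halfline[OF m] set_lebesgue_integral_def
    using has_bochner_integral_integral_eq[OF h] by simp
qed

lemma integrable_exp_poly_powr_halfline:
  assumes "\<mu> > -1" and "\<beta> > 0"
  shows "integrable (powr_halfline \<mu>) (\<lambda>x. exp (-\<beta>*x) * poly p x)"
proof -
  have "integrable (powr_halfline \<mu>) (\<lambda>x. \<Sum>i\<le>degree p. coeff p i * (exp (-\<beta>*x) * x ^ i))"
    using integrable_exp_power_powr_halfline[OF assms] by simp
  thus ?thesis by (simp add: poly_altdef sum_distrib_left algebra_simps)
qed

lemma set_integral_exp_poly_eq:
  "(LINT x:{0<..}|lborel. exp (-\<beta>*x) * poly p x * x powr \<mu>)
     = integral\<^sup>L (powr_halfline \<mu>) (\<lambda>x. exp (-\<beta>*x) * poly p x)"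
  using borel_measurable_exp_poly[of "-\<beta>" p]
  by (simp add: integral_powr_halfline borel_measurable_powr_halfline)

section \<open>Laguerre polynomials\<close>

lemma degree_pcompose_shift_diff_less:
  fixes P :: "'a :: idom poly"
  assumes "degree P > 0"
  shows "degree (pcompose P [:1, 1:] - P) < degree P"
proof -
  let ?D = "pcompose P [:1, 1:] - P"
  have d: "degree (pcompose P [:1, 1:]) = degree P" by (simp add: degree_pcompose)
  have "lead_coeff (pcompose P [:1, 1:]) = lead_coeff P" by (simp add: lead_coeff_comp)
  hence c: "coeff ?D (degree P) = 0" using d by simp
  have "degree ?D \<le> degree P" using degree_diff_le_max[of "pcompose P [:1, 1:]" P] d by simp
  moreover have "degree ?D \<noteq> degree P"
  proof
    assume "degree ?D = degree P"
    hence "?D = 0" using c by (metis leading_coeff_0_iff)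
    thus False using assms \<open>degree ?D = degree P\<close> by simp
  qed
  ultimately show ?thesis by simp
qed

lemma alternating_binomial_sum_poly_eq_0:
  fixes P :: "'a :: idom poly"
  shows "degree P < n \<Longrightarrow> (\<Sum>j\<le>n. (-1)^j * of_nat (n choose j) * poly P (of_nat j)) = 0"
proof (induction n arbitrary: P)
  case 0
  then show ?case by simp
next
  case (Suc n)
  define D where "D = pcompose P [:1, 1:] - P"
  have poly_D: "poly D x = poly P (x + 1) - poly P x" for x
    by (simp add: D_def poly_pcompose algebra_simps)
  have IH: "(\<Sum>j\<le>n. (-1)^j * of_nat (n choose j) * poly D (of_nat j)) = 0"
  proof (cases "degree P = 0")
    case True
    then obtain c where "P = [:c:]" by (metis degree_eq_zeroE)
    thus ?thesis by (simp add: D_def)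
  next
    case False
    hence "degree D < degree P" unfolding D_def by (intro degree_pcompose_shift_diff_less) simp
    thus ?thesis using Suc by simp
  qed
  let ?f = "\<lambda>j. poly P (of_nat j)"
  have top: "n choose Suc n = 0" by simp
  have "(\<Sum>j\<le>Suc n. (-1)^j * of_nat (Suc n choose j) * ?f j)
      = (\<Sum>j\<le>Suc n. (-1)^j * of_nat (n choose j) * ?f j)
        - (\<Sum>j\<le>n. (-1)^j * of_nat (n choose j) * ?f (Suc j))"
    by (subst (1 2) sum.atMost_Suc_shift) (simp add: ring_distribs sum.distrib sum_subtractf sum_negf)
  also have "\<dots> = - (\<Sum>j\<le>n. (-1)^j * of_nat (n choose j) * poly D (of_nat j))"
    by (simp add: poly_D sum_subtractf top algebra_simps)
  finally show ?case using IH by simp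
qed

lemma laguerre_Gamma_sum_eq_0:
  fixes \<alpha> :: real
  assumes "\<alpha> > -1" and "k < n"
  shows "(\<Sum>j\<le>n. (-1)^j * ((real n + \<alpha>) gchoose (n - j)) / fact j * Gamma (real (k + j) + \<alpha> + 1)) = 0"
proof -
  txt \<open>Up to the factor K, the j-th summand is (-1)^j (n choose j) P(j), where
    P(j) = pochhammer (\<alpha> + 1 + j) k is a polynomial of degree k < n in j.\<close>
  define K where "K = Gamma (\<alpha> + 1) * pochhammer (\<alpha> + 1) n / fact n"
  define P where "P = (\<Prod>i<k. [:\<alpha> + 1 + real i, 1:])"
  have poly_P: "poly P (real j) = pochhammer (\<alpha> + 1 + real j) k" for j
    by (simp add: P_def poly_prod pochhammer_prod atLeast0LessThan algebra_simps)
  have "degree P \<le> k"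
    unfolding P_def by (rule order.trans[OF degree_prod_sum_le]) simp_all
  hence deg_P: "degree P < n" using assms(2) by simp
  have not_pole: "\<alpha> + 1 \<notin> \<int>\<^sub>\<le>\<^sub>0"
    using assms(1) by (auto dest: nonpos_Ints_nonpos)
  have summand: "(-1)^j * ((real n + \<alpha>) gchoose (n - j)) / fact j * Gamma (real (k + j) + \<alpha> + 1)
      = K * ((-1)^j * real (n choose j) * poly P (real j))" if j: "j \<le> n" for j
  proof -
    have g: "(real n + \<alpha>) gchoose (n - j) = pochhammer (\<alpha> + 1 + real j) (n - j) / fact (n - j)"
      using j by (simp add: gbinomial_pochhammer' of_nat_diff algebra_simps)
    have G: "Gamma (real (k + j) + \<alpha> + 1) = Gamma (\<alpha> + 1) * pochhammer (\<alpha> + 1) (j + k)"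
      using pochhammer_Gamma[OF not_pole, of "j + k"] Gamma_eq_zero_iff[of "\<alpha> + 1"] not_pole
      by (auto simp: field_simps)
    have p1: "pochhammer (\<alpha> + 1) (j + k) = pochhammer (\<alpha> + 1) j * pochhammer (\<alpha> + 1 + real j) k"
      by (simp add: pochhammer_product')
    have p2: "pochhammer (\<alpha> + 1) n = pochhammer (\<alpha> + 1) j * pochhammer (\<alpha> + 1 + real j) (n - j)"
      using pochhammer_product'[of "\<alpha> + 1" j "n - j"] j by simp
    have b: "real (n choose j) = fact n / (fact j * fact (n - j))"
      using binomial_fact[OF j] by simp
    show ?thesis
      unfolding g G p1 K_def b poly_P p2 by (simp add: field_simps)
  qed
  have "(\<Sum>j\<le>n. (-1)^j * ((real n + \<alpha>) gchoose (n - j)) / fact j * Gamma (real (k + j) + \<alpha> + 1))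
      = (\<Sum>j\<le>n. K * ((-1)^j * real (n choose j) * poly P (real j)))"
    by (intro sum.cong refl summand) simp
  also have "\<dots> = K * (\<Sum>j\<le>n. (-1)^j * real (n choose j) * poly P (real j))"
    by (simp add: sum_distrib_left)
  also have "\<dots> = 0"
    using alternating_binomial_sum_poly_eq_0[OF deg_P] by simp
  finally show ?thesis .
qed

definition laguerre_poly :: "real \<Rightarrow> nat \<Rightarrow> real \<Rightarrow> real poly" where
  "laguerre_poly \<alpha> n \<beta> = (\<Sum>j\<le>n. monom ((-1)^j * ((real n + \<alpha>) gchoose (n - j)) / fact j * \<beta>^j) j)"

lemma poly_laguerre_poly: "poly (laguerre_poly \<alpha> n \<beta>) x = laguerre \<alpha> n (\<beta> * x)"
  by (simp add: laguerre_poly_def laguerre_def poly_sum poly_monom power_mult_distrib algebra_simps)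

lemma degree_laguerre_poly:
  assumes "\<beta> \<noteq> 0"
  shows "degree (laguerre_poly \<alpha> n \<beta>) = n"
proof (rule antisym)
  show "degree (laguerre_poly \<alpha> n \<beta>) \<le> n"
    by (rule degree_le) (simp add: laguerre_poly_def coeff_sum)
  have "coeff (laguerre_poly \<alpha> n \<beta>) n \<noteq> 0"
    using assms by (simp add: laguerre_poly_def coeff_sum)
  thus "n \<le> degree (laguerre_poly \<alpha> n \<beta>)" by (rule le_degree)
qed

lemma laguerre_poly_neq_0:
  assumes "\<beta> \<noteq> 0"
  shows "laguerre_poly \<alpha> n \<beta> \<noteq> 0"
proof
  assume "laguerre_poly \<alpha> n \<beta> = 0"
  hence "coeff (laguerre_poly \<alpha> n \<beta>) n = 0" by simp
  thus False using assms by (simp add: laguerre_poly_def coeff_sum)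
qed

lemma laguerre_poly_orthogonal_power:
  assumes a: "\<alpha> > -1" and b: "\<beta> > 0" and "k < n"
  shows "integral\<^sup>L (powr_halfline \<alpha>) (\<lambda>x. exp (-\<beta>*x) * x ^ k * poly (laguerre_poly \<alpha> n \<beta>) x) = 0"
proof -
  define c where "c j = (-1)^j * ((real n + \<alpha>) gchoose (n - j)) / fact j" for j
  have "integral\<^sup>L (powr_halfline \<alpha>) (\<lambda>x. exp (-\<beta>*x) * x ^ k * poly (laguerre_poly \<alpha> n \<beta>) x)
      = integral\<^sup>L (powr_halfline \<alpha>) (\<lambda>x. \<Sum>j\<le>n. c j * \<beta>^j * (exp (-\<beta>*x) * x ^ (k + j)))"
    by (simp add: laguerre_poly_def c_def poly_sum poly_monom sum_distrib_left power_add algebra_simps)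
  also have "\<dots> = (\<Sum>j\<le>n. c j * \<beta>^j * (Gamma (real (k + j) + \<alpha> + 1) / \<beta> powr (real (k + j) + \<alpha> + 1)))"
    using integrable_exp_power_powr_halfline[OF a b] integral_exp_power_powr_halfline[OF a b]
    by (simp add: integral_sum)
  also have "\<dots> = (\<Sum>j\<le>n. c j * Gamma (real (k + j) + \<alpha> + 1)) / \<beta> powr (real k + \<alpha> + 1)"
  proof -
    have "\<beta> powr (real (k + j) + \<alpha> + 1) = \<beta>^j * \<beta> powr (real k + \<alpha> + 1)" for j
      using b by (simp add: powr_add powr_realpow[symmetric] algebra_simps)
    thus ?thesis using b by (simp add: sum_divide_distrib)
  qed
  also have "\<dots> = 0"
    using laguerre_Gamma_sum_eq_0[OF a \<open>k < n\<close>] by (simp add: c_def)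
  finally show ?thesis .
qed

lemma laguerre_poly_orthogonal:
  assumes a: "\<alpha> > -1" and b: "\<beta> > 0" and "degree q < n"
  shows "integral\<^sup>L (powr_halfline \<alpha>) (\<lambda>x. exp (-\<beta>*x) * poly (q * laguerre_poly \<alpha> n \<beta>) x) = 0"
proof -
  let ?L = "laguerre_poly \<alpha> n \<beta>"
  have int: "integrable (powr_halfline \<alpha>) (\<lambda>x. exp (-\<beta>*x) * x ^ i * poly ?L x)" for i
    using integrable_exp_poly_powr_halfline[OF a b, of "monom 1 i * ?L"]
    by (simp add: poly_monom mult.assoc)
  have "integral\<^sup>L (powr_halfline \<alpha>) (\<lambda>x. exp (-\<beta>*x) * poly (q * ?L) x)
      = integral\<^sup>L (powr_halfline \<alpha>) (\<lambda>x. \<Sum>i\<le>degree q. coeff q i * (exp (-\<beta>*x) * x ^ i * poly ?L x))"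
    by (simp add: poly_altdef[of q] sum_distrib_left sum_distrib_right algebra_simps)
  also have "\<dots> = (\<Sum>i\<le>degree q. coeff q i * integral\<^sup>L (powr_halfline \<alpha>) (\<lambda>x. exp (-\<beta>*x) * x ^ i * poly ?L x))"
    using int by (simp add: integral_sum)
  also have "\<dots> = 0"
    using laguerre_poly_orthogonal_power[OF a b] \<open>degree q < n\<close> by simp
  finally show ?thesis .
qed

lemma x_mult_laguerre_poly_orthogonal:
  assumes a: "\<mu> > -1" and b: "\<beta> > 0" and "degree q < n"
  shows "integral\<^sup>L (powr_halfline \<mu>)
           (\<lambda>x. exp (-\<beta>*x) * poly (q * ([:0, 1:] * laguerre_poly (\<mu> + 1) n \<beta>)) x) = 0"
proof -
  let ?L = "laguerre_poly (\<mu> + 1) n \<beta>"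
  have "integral\<^sup>L (powr_halfline \<mu>) (\<lambda>x. exp (-\<beta>*x) * poly (q * ([:0, 1:] * ?L)) x)
      = integral\<^sup>L (powr_halfline \<mu>) (\<lambda>x. x * (exp (-\<beta>*x) * poly (q * ?L) x))"
    by (simp add: algebra_simps)
  also have "\<dots> = integral\<^sup>L (powr_halfline (\<mu> + 1)) (\<lambda>x. exp (-\<beta>*x) * poly (q * ?L) x)"
    using borel_measurable_exp_poly[of "-\<beta>" "q * ?L"] by (intro integral_powr_halfline_mult_x) simp
  also have "\<dots> = 0"
    using a b \<open>degree q < n\<close> by (intro laguerre_poly_orthogonal) simp_all
  finally show ?thesis .
qed

section \<open>Zeros of orthogonal polynomials\<close>

lemma poly_sign_constant_on_pos_if_no_pos_roots:
  fixes p :: "real poly"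
  assumes "\<And>x. x > 0 \<Longrightarrow> poly p x \<noteq> 0"
  shows "(\<forall>x>0. poly p x \<ge> 0) \<or> (\<forall>x>0. poly p x \<le> 0)"
proof (rule ccontr)
  assume "\<not> ?thesis"
  then obtain a b where ab: "a > 0" "b > 0" "poly p a < 0" "poly p b > 0"
    by (auto simp: not_le)
  show False
  proof (cases a b rule: linorder_cases)
    case less
    from poly_IVT_pos[OF less ab(3,4)] ab assms show False by auto
  next
    case greater
    from poly_IVT_neg[OF greater ab(4,3)] ab assms show False by auto
  qed (use ab in simp)
qed

lemma poly_sign_constant_on_pos_if_even_orders:
  fixes p :: "real poly"
  assumes "p \<noteq> 0" and "\<And>x. x > 0 \<Longrightarrow> even (order x p)"
  shows "(\<forall>x>0. poly p x \<ge> 0) \<or> (\<forall>x>0. poly p x \<le> 0)"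
  using assms
proof (induction "degree p" arbitrary: p rule: less_induct)
  case (less p)
  show ?case
  proof (cases "\<exists>r>0. poly p r = 0")
    case False
    thus ?thesis by (intro poly_sign_constant_on_pos_if_no_pos_roots) auto
  next
    case True
    then obtain r where r: "r > 0" "poly p r = 0" by auto
    have "order r p \<noteq> 0" using r less.prems(1) order_root by blast
    with less.prems(2)[OF r(1)] have "order r p \<ge> 2" by presburger
    hence "[:-r, 1:]^2 dvd p"
      using order_1[of r p] by (meson le_imp_power_dvd dvd_trans)
    then obtain q where q: "p = [:-r, 1:]^2 * q" by (auto simp: dvd_def)
    have "q \<noteq> 0" using q less.prems(1) by auto
    have "(\<forall>x>0. poly q x \<ge> 0) \<or> (\<forall>x>0. poly q x \<le> 0)"
    proof (rule less.hyps)
      show "degree q < degree p" using q \<open>q \<noteq> 0\<close> by (simp add: degree_mult_eq degree_power_eq)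
      fix x :: real assume "x > 0"
      have "order x p = order x ([:-r, 1:]^2) + order x q"
        using q less.prems(1) by (simp add: order_mult)
      moreover have "even (order x ([:-r, 1:]^2))"
        by (cases "x = r") (simp_all add: order_power_n_n order_0I)
      ultimately show "even (order x q)" using less.prems(2)[OF \<open>x > 0\<close>] by simp
    qed (rule \<open>q \<noteq> 0\<close>)
    moreover have "poly p x = (x - r)^2 * poly q x" for x using q by simp
    ultimately show ?thesis by (auto intro: mult_nonneg_nonneg mult_nonneg_nonpos)
  qed
qed

lemma poly_eq_0_if_AE_powr_halfline:
  fixes p :: "real poly"
  assumes "AE x in powr_halfline \<mu>. poly p x = 0"
  shows "p = 0"
proof (rule ccontr)
  assume "p \<noteq> 0"
  hence "{x. poly p x = 0} \<in> null_sets lborel"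
    by (intro finite_imp_null_set_lborel poly_roots_finite)
  hence "AE x in lborel. x \<notin> {x. poly p x = 0}"
    using AE_iff_null_sets by blast
  moreover have "AE x in lborel. 0 < x \<longrightarrow> poly p x = 0"
    using assms by (simp add: AE_powr_halfline_iff)
  ultimately have "AE x in lborel. x \<notin> {0<..1::real}"
    by eventually_elim auto
  hence "{0<..1::real} \<in> null_sets lborel"
    using AE_iff_null_sets[of "{0<..1::real}" lborel] by simp
  thus False by auto
qed

lemma poly_mult_even_pos_ordersE:
  fixes Q :: "real poly"
  assumes "Q \<noteq> 0"
  obtains q where "q \<noteq> 0" and "degree q \<le> card {x. 0 < x \<and> poly Q x = 0}"
    and "\<And>x. 0 < x \<Longrightarrow> even (order x (q * Q))"
proof -
  define T where "T = {x. 0 < x \<and> poly Q x = 0 \<and> odd (order x Q)}"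
  define q where "q = (\<Prod>t\<in>T. [:-t, 1:])"
  have "finite {x. 0 < x \<and> poly Q x = 0}"
    using poly_roots_finite[OF assms] by (rule rev_finite_subset) auto
  moreover have T_sub: "T \<subseteq> {x. 0 < x \<and> poly Q x = 0}" by (auto simp: T_def)
  ultimately have "finite T" "card T \<le> card {x. 0 < x \<and> poly Q x = 0}"
    by (auto intro: finite_subset card_mono)
  have "q \<noteq> 0" by (simp add: q_def \<open>finite T\<close>)
  have "degree q \<le> (\<Sum>t\<in>T. degree [:-t, 1::real:])"
    unfolding q_def by (rule order.trans[OF degree_prod_sum_le]) (simp_all add: \<open>finite T\<close>)
  hence "degree q \<le> card {x. 0 < x \<and> poly Q x = 0}"
    using \<open>card T \<le> _\<close> by simp
  moreover have "even (order x (q * Q))" if "0 < x" for x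
  proof -
    have order_q: "order x q = (if x \<in> T then 1 else 0)"
    proof (cases "x \<in> T")
      case True
      let ?R = "\<Prod>t\<in>T-{x}. [:-t, 1:]"
      have q_eq: "q = [:-x, 1:] * ?R"
        unfolding q_def using True \<open>finite T\<close> by (simp add: prod.remove)
      have "order x q = order x [:-x, 1:] + order x ?R"
        unfolding q_eq by (rule order_mult) (use \<open>q \<noteq> 0\<close> q_eq in simp)
      moreover have "order x ?R = 0"
        using \<open>finite T\<close> by (intro order_0I) (simp add: poly_prod)
      ultimately have "order x q = order x [:-x, 1:]" by simp
      thus ?thesis using True order_power_n_n[of x 1] by simp
    next
      case False
      thus ?thesis using \<open>finite T\<close> by (simp add: q_def poly_prod order_0I)
    qed
    have "order x (q * Q) = order x q + order x Q"
      using \<open>q \<noteq> 0\<close> assms by (simp add: order_mult)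
    thus ?thesis
      using order_q that by (cases "poly Q x = 0") (auto simp: T_def order_0I)
  qed
  ultimately show ?thesis using that \<open>q \<noteq> 0\<close> by blast
qed

lemma card_pos_roots_ge_if_orthogonal:
  fixes Q :: "real poly"
  assumes a: "\<alpha> > -1" and b: "\<beta> > 0" and "Q \<noteq> 0"
    and orth: "\<And>q. degree q < n \<Longrightarrow>
      integral\<^sup>L (powr_halfline \<alpha>) (\<lambda>x. exp (-\<beta>*x) * poly (q * Q) x) = 0"
  shows "n \<le> card {x. 0 < x \<and> poly Q x = 0}"
proof (rule ccontr)
  txt \<open>Otherwise Q times the product of the x - t over its positive zeros t of odd order has
    constant sign on (0,\<infinity>), yet its weighted integral vanishes by orthogonality.\<close>
  assume few_roots: "\<not> ?thesis"
  obtain q where "q \<noteq> 0" and deg_q: "degree q \<le> card {x. 0 < x \<and> poly Q x = 0}"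
    and even: "\<And>x. 0 < x \<Longrightarrow> even (order x (q * Q))"
    using poly_mult_even_pos_ordersE[OF \<open>Q \<noteq> 0\<close>] by blast
  let ?P = "q * Q"
  have "?P \<noteq> 0" using \<open>q \<noteq> 0\<close> \<open>Q \<noteq> 0\<close> by simp
  obtain s :: real where "s \<noteq> 0" and sign: "\<And>x. 0 < x \<Longrightarrow> 0 \<le> s * poly ?P x"
    using poly_sign_constant_on_pos_if_even_orders[OF \<open>?P \<noteq> 0\<close> even]
    by (metis mult_minus_left mult_1 neg_0_le_iff_le zero_neq_neg_one one_neq_zero)
  let ?g = "\<lambda>x. s * (exp (-\<beta>*x) * poly ?P x)"
  have "integrable (powr_halfline \<alpha>) ?g"
    by (intro Bochner_Integration.integrable_mult_right integrable_exp_poly_powr_halfline[OF a b])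
  moreover have "AE x in powr_halfline \<alpha>. 0 \<le> ?g x"
    unfolding AE_powr_halfline_iff
  proof (rule AE_I2, rule impI)
    fix x :: real assume "0 < x"
    hence "0 \<le> exp (-\<beta>*x) * (s * poly ?P x)" using sign by simp
    thus "0 \<le> ?g x" by (simp only: mult.left_commute)
  qed
  moreover have "integral\<^sup>L (powr_halfline \<alpha>) ?g = 0"
    using orth deg_q few_roots by simp
  ultimately have "AE x in powr_halfline \<alpha>. ?g x = 0"
    using integral_nonneg_eq_0_iff_AE by blast
  hence "AE x in powr_halfline \<alpha>. poly ?P x = 0"
    using \<open>s \<noteq> 0\<close> by simp
  hence "?P = 0" by (rule poly_eq_0_if_AE_powr_halfline)
  thus False using \<open>?P \<noteq> 0\<close> by simp
qed

lemma
  assumes "\<alpha> > -1" and "\<beta> > 0"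
  shows laguerre_poly_roots_pos: "{x. poly (laguerre_poly \<alpha> n \<beta>) x = 0} \<subseteq> {0<..}"
    and card_laguerre_poly_roots: "card {x. poly (laguerre_poly \<alpha> n \<beta>) x = 0} = n"
proof -
  let ?L = "laguerre_poly \<alpha> n \<beta>"
  have "?L \<noteq> 0" using assms by (simp add: laguerre_poly_neq_0)
  have fin: "finite {x. poly ?L x = 0}" by (rule poly_roots_finite[OF \<open>?L \<noteq> 0\<close>])
  have sub: "{x. 0 < x \<and> poly ?L x = 0} \<subseteq> {x. poly ?L x = 0}" by auto
  have "n \<le> card {x. 0 < x \<and> poly ?L x = 0}"
    using assms \<open>?L \<noteq> 0\<close> laguerre_poly_orthogonal[OF assms]
    by (rule card_pos_roots_ge_if_orthogonal)
  moreover have "card {x. poly ?L x = 0} \<le> n"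
    using card_poly_roots_bound[OF \<open>?L \<noteq> 0\<close>] assms by (simp add: degree_laguerre_poly)
  moreover have "card {x. 0 < x \<and> poly ?L x = 0} \<le> card {x. poly ?L x = 0}"
    by (rule card_mono[OF fin sub])
  ultimately have card_eq: "card {x. 0 < x \<and> poly ?L x = 0} = card {x. poly ?L x = 0}"
    and card_n: "card {x. poly ?L x = 0} = n"
    by linarith+
  have "{x. 0 < x \<and> poly ?L x = 0} = {x. poly ?L x = 0}"
    by (rule card_subset_eq[OF fin sub card_eq])
  thus "{x. poly ?L x = 0} \<subseteq> {0<..}" by auto
  show "card {x. poly ?L x = 0} = n" by (rule card_n)
qed

section \<open>Interpolatory quadrature\<close>

lemma lagrange_basisE:
  fixes S :: "'a :: field set"
  assumes "finite S"
  obtains L where "\<And>s. s \<in> S \<Longrightarrow> degree (L s) < card S"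
    and "\<And>s t. s \<in> S \<Longrightarrow> t \<in> S \<Longrightarrow> poly (L s) t = (if t = s then 1 else 0)"
proof -
  define L where "L s = smult (inverse (\<Prod>t\<in>S-{s}. s - t)) (\<Prod>t\<in>S-{s}. [:-t, 1:])" for s
  have "degree (L s) < card S" if "s \<in> S" for s
  proof -
    have "degree (L s) \<le> (\<Sum>t\<in>S-{s}. degree [:-t, 1::'a:])"
      unfolding L_def
      by (rule order.trans[OF degree_smult_le order.trans[OF degree_prod_sum_le]]) (simp_all add: assms)
    also have "\<dots> < card S"
      using assms that card_gt_0_iff[of S] by auto
    finally show ?thesis .
  qed
  moreover have "poly (L s) t = (if t = s then 1 else 0)" if "s \<in> S" "t \<in> S" for s t
  proof (cases "t = s")
    case False
    hence "(\<Prod>u\<in>S-{s}. t - u) = 0" using assms that by (intro prod_zero) auto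
    thus ?thesis using False by (simp add: L_def poly_prod)
  qed (simp add: L_def poly_prod assms)
  ultimately show ?thesis using that by blast
qed

lemma lagrange_interpolation:
  fixes S :: "'a :: field set" and p :: "'a poly"
  assumes "finite S" and deg_L: "\<And>s. s \<in> S \<Longrightarrow> degree (L s) < card S"
    and poly_L: "\<And>s t. s \<in> S \<Longrightarrow> t \<in> S \<Longrightarrow> poly (L s) t = (if t = s then 1 else 0)"
    and "degree p < card S"
  shows "p = (\<Sum>s\<in>S. smult (poly p s) (L s))"
proof (rule poly_eqI_degree[of S])
  fix x assume "x \<in> S"
  thus "poly p x = poly (\<Sum>s\<in>S. smult (poly p s) (L s)) x"
    using \<open>finite S\<close> by (simp add: poly_sum poly_L if_distrib cong: if_cong)
next
  show "degree (\<Sum>s\<in>S. smult (poly p s) (L s)) < card S"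
    using \<open>degree p < card S\<close> deg_L
    by (intro degree_sum_less) (auto intro: le_less_trans[OF degree_smult_le])
qed (rule \<open>degree p < card S\<close>)

lemma interpolatory_quadrature_exact:
  fixes I :: "'a :: field poly \<Rightarrow> 'a" and P :: "'a poly"
  assumes add: "\<And>p q. I (p + q) = I p + I q" and smult: "\<And>c p. I (smult c p) = c * I p"
    and "P \<noteq> 0" and S: "S = {x. poly P x = 0}" and card_S: "card S = degree P"
    and "degree P \<le> Suc m"
    and orth: "\<And>q. degree q + degree P \<le> m \<Longrightarrow> I (q * P) = 0"
    and deg_L: "\<And>s. s \<in> S \<Longrightarrow> degree (L s) < card S"
    and poly_L: "\<And>s t. s \<in> S \<Longrightarrow> t \<in> S \<Longrightarrow> poly (L s) t = (if t = s then 1 else 0)"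
    and "degree p \<le> m"
  shows "I p = (\<Sum>s\<in>S. poly p s * I (L s))"
proof -
  have "finite S" unfolding S by (rule poly_roots_finite[OF \<open>P \<noteq> 0\<close>])
  have I_0: "I 0 = 0" using smult[of 0 0] by simp
  define d where "d = p div P"
  define r where "r = p mod P"
  have p_eq: "p = d * P + r" by (simp add: d_def r_def)
  have deg_r: "r = 0 \<or> degree r < degree P"
    using degree_mod_less'[OF \<open>P \<noteq> 0\<close>, of p] by (auto simp: r_def)
  hence "degree r \<le> m" using \<open>degree P \<le> Suc m\<close> by auto
  have "I p = I (d * P) + I r" by (subst p_eq) (rule add)
  moreover have "I (d * P) = 0"
  proof (cases "d = 0")
    case False
    have "degree (d * P) \<le> max (degree p) (degree r)"
      using degree_diff_le_max[of p r] p_eq by (metis add_diff_cancel_right')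
    hence "degree d + degree P \<le> m"
      using False \<open>P \<noteq> 0\<close> \<open>degree p \<le> m\<close> \<open>degree r \<le> m\<close> by (simp add: degree_mult_eq)
    thus ?thesis by (rule orth)
  qed (simp add: I_0)
  moreover have "I r = (\<Sum>s\<in>S. poly r s * I (L s))"
  proof (cases "r = 0")
    case False
    hence "r = (\<Sum>s\<in>S. smult (poly r s) (L s))"
      using deg_r card_S by (intro lagrange_interpolation[OF \<open>finite S\<close> deg_L poly_L]) simp_all
    hence "I r = I (\<Sum>s\<in>S. smult (poly r s) (L s))" by (rule arg_cong)
    also have "\<dots> = (\<Sum>s\<in>S. poly r s * I (L s))"
      using sum_comp_morphism[of I "\<lambda>s. smult (poly r s) (L s)" S, OF I_0 add] by (simp add: smult)
    finally show ?thesis .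
  qed (simp add: I_0)
  moreover have "poly r s = poly p s" if "s \<in> S" for s
    using that S by (simp add: p_eq)
  ultimately show ?thesis by simp
qed

lemma ex1_interpolatory_quadrature:
  fixes I :: "'a :: field poly \<Rightarrow> 'a" and P :: "'a poly"
  assumes add: "\<And>p q. I (p + q) = I p + I q" and smult: "\<And>c p. I (smult c p) = c * I p"
    and "P \<noteq> 0" and S: "S = {x. poly P x = 0}" and card_S: "card S = degree P"
    and "degree P \<le> Suc m"
    and orth: "\<And>q. degree q + degree P \<le> m \<Longrightarrow> I (q * P) = 0"
    and e: "\<And>x. x \<in> S \<Longrightarrow> e x \<noteq> 0"
  shows "\<exists>!w. (\<forall>x. x \<notin> S \<longrightarrow> w x = 0) \<and>
           (\<forall>p. degree p \<le> m \<longrightarrow> I p = (\<Sum>\<xi>\<in>S. e \<xi> * poly p \<xi> * w \<xi>))"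
proof -
  have "finite S" unfolding S by (rule poly_roots_finite[OF \<open>P \<noteq> 0\<close>])
  obtain L where deg_L: "\<And>s. s \<in> S \<Longrightarrow> degree (L s) < card S"
    and poly_L: "\<And>s t. s \<in> S \<Longrightarrow> t \<in> S \<Longrightarrow> poly (L s) t = (if t = s then 1 else 0)"
    using lagrange_basisE[OF \<open>finite S\<close>] by blast
  define w where "w x = (if x \<in> S then I (L x) / e x else 0)" for x
  show ?thesis
  proof (rule ex1I[of _ w], intro conjI allI impI)
    fix p :: "'a poly" assume "degree p \<le> m"
    hence "I p = (\<Sum>s\<in>S. poly p s * I (L s))"
      using interpolatory_quadrature_exact[OF add smult assms(3-7) deg_L poly_L] by blast
    also have "\<dots> = (\<Sum>\<xi>\<in>S. e \<xi> * poly p \<xi> * w \<xi>)"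
      by (rule sum.cong) (simp_all add: w_def e)
    finally show "I p = (\<Sum>\<xi>\<in>S. e \<xi> * poly p \<xi> * w \<xi>)" .
  next
    fix w' assume w': "(\<forall>x. x \<notin> S \<longrightarrow> w' x = 0) \<and>
      (\<forall>p. degree p \<le> m \<longrightarrow> I p = (\<Sum>\<xi>\<in>S. e \<xi> * poly p \<xi> * w' \<xi>))"
    show "w' = w"
    proof
      fix x show "w' x = w x"
      proof (cases "x \<in> S")
        case True
        have "degree (L x) \<le> m" using deg_L[OF True] card_S \<open>degree P \<le> Suc m\<close> by simp
        hence "I (L x) = (\<Sum>\<xi>\<in>S. e \<xi> * poly (L x) \<xi> * w' \<xi>)" using w' by blast
        also have "\<dots> = (\<Sum>\<xi>\<in>S. if \<xi> = x then e x * w' x else 0)"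
          by (rule sum.cong[OF refl]) (simp add: poly_L True)
        also have "\<dots> = e x * w' x"
          using \<open>finite S\<close> True by simp
        finally show ?thesis using True e[OF True] by (simp add: w_def)
      qed (use w' in \<open>simp add: w_def\<close>)
    qed
  qed (simp add: w_def)
qed

lemma ex1_interpolating_poly:
  fixes S :: "'a :: field set"
  assumes "finite S" and card_S: "card S = Suc N" and e: "\<And>x. x \<in> S \<Longrightarrow> e x \<noteq> 0"
  shows "\<exists>!q. degree q \<le> N \<and> (\<forall>\<xi>\<in>S. e \<xi> * poly q \<xi> = v \<xi>)"
proof -
  obtain L where deg_L: "\<And>s. s \<in> S \<Longrightarrow> degree (L s) < card S"
    and poly_L: "\<And>s t. s \<in> S \<Longrightarrow> t \<in> S \<Longrightarrow> poly (L s) t = (if t = s then 1 else 0)"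
    using lagrange_basisE[OF \<open>finite S\<close>] by blast
  define q where "q = (\<Sum>s\<in>S. smult (v s / e s) (L s))"
  have "degree q \<le> N"
    unfolding q_def using deg_L card_S
    by (intro degree_sum_le) (auto intro: order.trans[OF degree_smult_le] less_Suc_eq_le[THEN iffD1]
        simp: \<open>finite S\<close>)
  moreover have "e \<xi> * poly q \<xi> = v \<xi>" if "\<xi> \<in> S" for \<xi>
  proof -
    have "poly q \<xi> = (\<Sum>s\<in>S. if s = \<xi> then v \<xi> / e \<xi> else 0)"
      unfolding q_def poly_sum by (rule sum.cong[OF refl]) (auto simp: poly_L that)
    also have "\<dots> = v \<xi> / e \<xi>" using \<open>finite S\<close> that by simp
    finally show ?thesis using e[OF that] by simp
  qed
  ultimately have q: "degree q \<le> N \<and> (\<forall>\<xi>\<in>S. e \<xi> * poly q \<xi> = v \<xi>)" by blast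
  show ?thesis
  proof (rule ex1I[of _ q])
    show "degree q \<le> N \<and> (\<forall>\<xi>\<in>S. e \<xi> * poly q \<xi> = v \<xi>)" by (rule q)
  next
    fix q' assume q': "degree q' \<le> N \<and> (\<forall>\<xi>\<in>S. e \<xi> * poly q' \<xi> = v \<xi>)"
    show "q' = q"
    proof (rule poly_eqI_degree[of S])
      fix x assume "x \<in> S"
      thus "poly q' x = poly q x" using q q' e[OF \<open>x \<in> S\<close>] by (metis mult_left_cancel)
    qed (use q q' card_S in simp_all)
  qed
qed

section \<open>Laguerre-Gauss and Laguerre-Gauss-Radau quadrature\<close>

lemma lg_nodes_Gauss:
  assumes "\<mu> > -1" and "\<beta> > 0"
  shows "lg_nodes Gauss \<mu> \<beta> N = {x. poly (laguerre_poly \<mu> (N + 1) \<beta>) x = 0}"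
  using laguerre_poly_roots_pos[OF assms, of "N + 1"]
  by (auto simp: lg_nodes_def hat_laguerre_def poly_laguerre_poly)

lemma lg_nodes_Radau:
  assumes "\<mu> > -1" and "\<beta> > 0"
  shows "lg_nodes Radau \<mu> \<beta> N = insert 0 {x. poly (laguerre_poly (\<mu> + 1) N \<beta>) x = 0}"
  using laguerre_poly_roots_pos[of "\<mu> + 1" \<beta> N] assms
  by (auto simp: lg_nodes_def hat_laguerre_def poly_laguerre_poly)

lemma lg_node_polyE:
  assumes a: "\<mu> > -1" and b: "\<beta> > 0"
  obtains P where "P \<noteq> 0" and "lg_nodes Z \<mu> \<beta> N = {x. poly P x = 0}"
    and "degree P = N + 1" and "card (lg_nodes Z \<mu> \<beta> N) = N + 1"
    and "\<And>q. degree q + (N + 1) \<le> 2 * N + lam Z \<Longrightarrow>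
           integral\<^sup>L (powr_halfline \<mu>) (\<lambda>x. exp (-\<beta>*x) * poly (q * P) x) = 0"
proof (cases Z)
  case Gauss
  let ?P = "laguerre_poly \<mu> (N + 1) \<beta>"
  show ?thesis
  proof (rule that[of ?P])
    show "?P \<noteq> 0" "degree ?P = N + 1" using b by (simp_all add: laguerre_poly_neq_0 degree_laguerre_poly)
    show "lg_nodes Z \<mu> \<beta> N = {x. poly ?P x = 0}" using Gauss lg_nodes_Gauss[OF a b] by simp
    thus "card (lg_nodes Z \<mu> \<beta> N) = N + 1" by (simp add: card_laguerre_poly_roots[OF a b])
    show "integral\<^sup>L (powr_halfline \<mu>) (\<lambda>x. exp (-\<beta>*x) * poly (q * ?P) x) = 0"
      if "degree q + (N + 1) \<le> 2 * N + lam Z" for q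
      using that Gauss by (intro laguerre_poly_orthogonal[OF a b]) (simp add: lam_def)
  qed
next
  case Radau
  let ?L = "laguerre_poly (\<mu> + 1) N \<beta>"
  have "?L \<noteq> 0" using b by (simp add: laguerre_poly_neq_0)
  have "0 \<notin> {x. poly ?L x = 0}" using laguerre_poly_roots_pos[of "\<mu> + 1" \<beta> N] a b by auto
  show ?thesis
  proof (rule that[of "[:0, 1:] * ?L"])
    show "[:0, 1:] * ?L \<noteq> 0" "degree ([:0, 1:] * ?L) = N + 1"
      using b \<open>?L \<noteq> 0\<close> by (simp_all add: degree_laguerre_poly)
    show "lg_nodes Z \<mu> \<beta> N = {x. poly ([:0, 1:] * ?L) x = 0}"
      using Radau lg_nodes_Radau[OF a b] by auto
    show "card (lg_nodes Z \<mu> \<beta> N) = N + 1"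
      using Radau lg_nodes_Radau[OF a b] \<open>0 \<notin> _\<close> poly_roots_finite[OF \<open>?L \<noteq> 0\<close>]
        card_laguerre_poly_roots[of "\<mu> + 1" \<beta> N] a b by simp
    show "integral\<^sup>L (powr_halfline \<mu>) (\<lambda>x. exp (-\<beta>*x) * poly (q * ([:0, 1:] * ?L)) x) = 0"
      if "degree q + (N + 1) \<le> 2 * N + lam Z" for q
      using that Radau by (intro x_mult_laguerre_poly_orthogonal[OF a b]) (simp add: lam_def)
  qed
qed

lemma lg_weight_exact:
  assumes a: "\<mu> > -1" and b: "\<beta> > 0" and "degree p \<le> 2 * N + lam Z"
  shows "integral\<^sup>L (powr_halfline \<mu>) (\<lambda>x. exp (-\<beta>*x) * poly p x)
           = (\<Sum>\<xi>\<in>lg_nodes Z \<mu> \<beta> N. exp (-\<beta>*\<xi>) * poly p \<xi> * lg_weight Z \<mu> \<beta> N \<xi>)"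
proof -
  obtain P where "P \<noteq> 0" and nodes: "lg_nodes Z \<mu> \<beta> N = {x. poly P x = 0}"
    and deg_P: "degree P = N + 1" and card: "card (lg_nodes Z \<mu> \<beta> N) = N + 1"
    and orth: "\<And>q. degree q + (N + 1) \<le> 2 * N + lam Z \<Longrightarrow>
                 integral\<^sup>L (powr_halfline \<mu>) (\<lambda>x. exp (-\<beta>*x) * poly (q * P) x) = 0"
    using lg_node_polyE[OF a b] by blast
  define I where "I p = integral\<^sup>L (powr_halfline \<mu>) (\<lambda>x. exp (-\<beta>*x) * poly p x)" for p
  have "I (p + q) = I p + I q" for p q
    unfolding I_def using integrable_exp_poly_powr_halfline[OF a b]
    by (simp add: distrib_left Bochner_Integration.integral_add)
  moreover have "I (smult c p) = c * I p" for c p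
    by (simp add: I_def mult.left_commute)
  ultimately have "\<exists>!w. (\<forall>x. x \<notin> lg_nodes Z \<mu> \<beta> N \<longrightarrow> w x = 0) \<and>
      (\<forall>p. degree p \<le> 2 * N + lam Z \<longrightarrow>
         I p = (\<Sum>\<xi>\<in>lg_nodes Z \<mu> \<beta> N. exp (-\<beta>*\<xi>) * poly p \<xi> * w \<xi>))"
    using \<open>P \<noteq> 0\<close> nodes card deg_P orth
    by (intro ex1_interpolatory_quadrature[where P = P]) (simp_all add: I_def)
  hence "\<forall>p. degree p \<le> 2 * N + lam Z \<longrightarrow>
      I p = (\<Sum>\<xi>\<in>lg_nodes Z \<mu> \<beta> N. exp (-\<beta>*\<xi>) * poly p \<xi> * lg_weight Z \<mu> \<beta> N \<xi>)"
    unfolding lg_weight_def I_def set_integral_exp_poly_eq by (rule theI'[THEN conjunct2])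
  thus ?thesis using assms(3) by (simp add: I_def)
qed

lemma lg_interpE:
  assumes a: "\<mu> > -1" and b: "\<beta> > 0"
  obtains q where "degree q \<le> N"
    and "\<And>\<xi>. \<xi> \<in> lg_nodes Z \<mu> \<beta> N \<Longrightarrow> exp (-\<beta>*\<xi>/2) * poly q \<xi> = v \<xi>"
    and "lg_interp Z \<mu> \<beta> N v = (\<lambda>x. exp (-\<beta>*x/2) * poly q x)"
proof -
  obtain P where "P \<noteq> 0" and nodes: "lg_nodes Z \<mu> \<beta> N = {x. poly P x = 0}"
    and "degree P = N + 1" and card: "card (lg_nodes Z \<mu> \<beta> N) = N + 1"
    and "\<And>q. degree q + (N + 1) \<le> 2 * N + lam Z \<Longrightarrow>
           integral\<^sup>L (powr_halfline \<mu>) (\<lambda>x. exp (-\<beta>*x) * poly (q * P) x) = 0"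
    using lg_node_polyE[OF a b] by blast
  have "finite (lg_nodes Z \<mu> \<beta> N)"
    unfolding nodes by (rule poly_roots_finite[OF \<open>P \<noteq> 0\<close>])
  hence "\<exists>!q. degree q \<le> N \<and> (\<forall>\<xi>\<in>lg_nodes Z \<mu> \<beta> N. exp (-\<beta>*\<xi>/2) * poly q \<xi> = v \<xi>)"
    by (rule ex1_interpolating_poly) (simp_all add: card)
  let ?q = "THE q. degree q \<le> N \<and> (\<forall>\<xi>\<in>lg_nodes Z \<mu> \<beta> N. exp (-\<beta>*\<xi>/2) * poly q \<xi> = v \<xi>)"
  from \<open>\<exists>!q. _\<close> have "degree ?q \<le> N \<and> (\<forall>\<xi>\<in>lg_nodes Z \<mu> \<beta> N. exp (-\<beta>*\<xi>/2) * poly ?q \<xi> = v \<xi>)"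
    by (rule theI')
  moreover have "lg_interp Z \<mu> \<beta> N v = (\<lambda>x. exp (-\<beta>*x/2) * poly ?q x)"
    unfolding lg_interp_def Let_def ..
  ultimately show ?thesis using that by blast
qed

lemma
  assumes "\<mu> > -1" and "\<beta> > 0"
  shows borel_measurable_lg_interp: "lg_interp Z \<mu> \<beta> N v \<in> borel_measurable (powr_halfline \<mu>)"
    and integrable_lg_interp_square:
      "integrable (powr_halfline \<mu>) (\<lambda>x. (lg_interp Z \<mu> \<beta> N v x)\<^sup>2)"
proof -
  obtain q where \<psi>: "lg_interp Z \<mu> \<beta> N v = (\<lambda>x. exp (-\<beta>*x/2) * poly q x)"
    using lg_interpE[OF assms] by blast
  show "lg_interp Z \<mu> \<beta> N v \<in> borel_measurable (powr_halfline \<mu>)"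
    unfolding \<psi> using borel_measurable_exp_poly[of "-\<beta>/2" q]
    by (intro borel_measurable_powr_halfline) simp
  have square: "(\<lambda>x. (lg_interp Z \<mu> \<beta> N v x)\<^sup>2) = (\<lambda>x. exp (-\<beta>*x) * poly (q * q) x)"
    by (simp add: \<psi> power2_eq_square algebra_simps flip: exp_add)
  show "integrable (powr_halfline \<mu>) (\<lambda>x. (lg_interp Z \<mu> \<beta> N v x)\<^sup>2)"
    unfolding square by (rule integrable_exp_poly_powr_halfline[OF assms])
qed

lemma lg_quadrature_of_product:
  assumes a: "\<mu> > -1" and b: "\<beta> > 0"
  shows "(\<Sum>\<xi>\<in>lg_nodes Z \<mu> \<beta> N. v1 \<xi> * v2 \<xi> * lg_weight Z \<mu> \<beta> N \<xi>)
           = integral\<^sup>L (powr_halfline \<mu>) (\<lambda>x. lg_interp Z \<mu> \<beta> N v1 x * lg_interp Z \<mu> \<beta> N v2 x)"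
proof -
  obtain q1 where "degree q1 \<le> N"
    and q1: "\<And>\<xi>. \<xi> \<in> lg_nodes Z \<mu> \<beta> N \<Longrightarrow> exp (-\<beta>*\<xi>/2) * poly q1 \<xi> = v1 \<xi>"
    and \<psi>1: "lg_interp Z \<mu> \<beta> N v1 = (\<lambda>x. exp (-\<beta>*x/2) * poly q1 x)"
    using lg_interpE[OF a b, where Z = Z and N = N and v = v1] by blast
  obtain q2 where "degree q2 \<le> N"
    and q2: "\<And>\<xi>. \<xi> \<in> lg_nodes Z \<mu> \<beta> N \<Longrightarrow> exp (-\<beta>*\<xi>/2) * poly q2 \<xi> = v2 \<xi>"
    and \<psi>2: "lg_interp Z \<mu> \<beta> N v2 = (\<lambda>x. exp (-\<beta>*x/2) * poly q2 x)"
    using lg_interpE[OF a b, where Z = Z and N = N and v = v2] by blast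
  have half: "exp (-\<beta>*x/2) * exp (-\<beta>*x/2) = exp (-\<beta>*x)" for x
    by (simp flip: exp_add)
  have "degree (q1 * q2) \<le> 2 * N + lam Z"
    using degree_mult_le[of q1 q2] \<open>degree q1 \<le> N\<close> \<open>degree q2 \<le> N\<close> by simp
  hence "(\<Sum>\<xi>\<in>lg_nodes Z \<mu> \<beta> N. exp (-\<beta>*\<xi>) * poly (q1 * q2) \<xi> * lg_weight Z \<mu> \<beta> N \<xi>)
      = integral\<^sup>L (powr_halfline \<mu>) (\<lambda>x. exp (-\<beta>*x) * poly (q1 * q2) x)"
    by (rule lg_weight_exact[OF a b, symmetric])
  moreover have "v1 \<xi> * v2 \<xi> = exp (-\<beta>*\<xi>) * poly (q1 * q2) \<xi>" if "\<xi> \<in> lg_nodes Z \<mu> \<beta> N" for \<xi>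
    unfolding q1[OF that, symmetric] q2[OF that, symmetric] half[symmetric] poly_mult
    by (simp only: ac_simps)
  moreover have "lg_interp Z \<mu> \<beta> N v1 x * lg_interp Z \<mu> \<beta> N v2 x = exp (-\<beta>*x) * poly (q1 * q2) x" for x
    unfolding \<psi>1 \<psi>2 half[symmetric] poly_mult by (simp only: ac_simps)
  ultimately show ?thesis by simp
qed

theorem mainTheorem12:
  fixes \<mu> \<beta> :: real and N :: nat and Z :: quad_kind and \<phi>1 \<phi>2 :: "real \<Rightarrow> real"
  assumes "\<mu> > -1" and "\<beta> > 0" and "N \<ge> 1"
    and "continuous_on {0..} \<phi>1" and "continuous_on {0..} \<phi>2"
    and "set_integrable lborel {0<..} (\<lambda>x. (\<phi>1 x)\<^sup>2 * x powr \<mu>)"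
    and "set_integrable lborel {0<..} (\<lambda>x. (\<phi>2 x)\<^sup>2 * x powr \<mu>)"
  shows "let \<phi> = (\<lambda>x. \<phi>1 x * \<phi>2 x);
             \<psi>1 = lg_interp Z \<mu> \<beta> N \<phi>1;
             \<psi>2 = lg_interp Z \<mu> \<beta> N \<phi>2
         in \<bar>(LINT x:{0<..}|lborel. \<phi> x * x powr \<mu>)
              - (\<Sum>\<xi>\<in>lg_nodes Z \<mu> \<beta> N. \<phi> \<xi> * lg_weight Z \<mu> \<beta> N \<xi>)\<bar>
            \<le> (wnorm \<mu> \<phi>1 + wnorm \<mu> \<phi>2 + wnorm \<mu> \<psi>1 + wnorm \<mu> \<psi>2)
              * (wnorm \<mu> (\<lambda>x. \<phi>1 x - \<psi>1 x) + wnorm \<mu> (\<lambda>x. \<phi>2 x - \<psi>2 x))"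
proof -
  let ?M = "powr_halfline \<mu>"
  define \<psi>1 where "\<psi>1 = lg_interp Z \<mu> \<beta> N \<phi>1"
  define \<psi>2 where "\<psi>2 = lg_interp Z \<mu> \<beta> N \<phi>2"
  have meas: "\<phi>1 \<in> borel_measurable ?M" "\<phi>2 \<in> borel_measurable ?M"
      "\<psi>1 \<in> borel_measurable ?M" "\<psi>2 \<in> borel_measurable ?M"
    using assms(1,2,4,5) unfolding \<psi>1_def \<psi>2_def
    by (simp_all add: borel_measurable_powr_halfline_if_continuous_on borel_measurable_lg_interp)
  have squares: "integrable ?M (\<lambda>x. (\<phi>1 x)\<^sup>2)" "integrable ?M (\<lambda>x. (\<phi>2 x)\<^sup>2)"
      "integrable ?M (\<lambda>x. (\<psi>1 x)\<^sup>2)" "integrable ?M (\<lambda>x. (\<psi>2 x)\<^sup>2)"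
    using assms(6,7) meas integrable_lg_interp_square[OF assms(1,2)] unfolding \<psi>1_def \<psi>2_def
    by (simp_all add: integrable_powr_halfline_iff)
  have "(LINT x:{0<..}|lborel. \<phi>1 x * \<phi>2 x * x powr \<mu>) = integral\<^sup>L ?M (\<lambda>x. \<phi>1 x * \<phi>2 x)"
    using meas by (simp add: integral_powr_halfline)
  moreover have "(\<Sum>\<xi>\<in>lg_nodes Z \<mu> \<beta> N. \<phi>1 \<xi> * \<phi>2 \<xi> * lg_weight Z \<mu> \<beta> N \<xi>)
      = integral\<^sup>L ?M (\<lambda>x. \<psi>1 x * \<psi>2 x)"
    unfolding \<psi>1_def \<psi>2_def using assms(1,2) by (rule lg_quadrature_of_product)
  ultimately show ?thesis
    using integral_mult_diff_le_wnorm[OF meas squares] unfolding Let_def \<psi>1_def \<psi>2_def by simp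
qed

end
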